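(* Let $d>K\ge1$, $\mathbf Q\in\mathrm{St}(d,K)$, $\lambda_1>\dots>\lambda_K>0$, $\boldsymbol\Theta=\mathrm{diag}(\sqrt{\lambda_1},\dots,\sqrt{\lambda_K})$, $a_1>\dots>a_K>0$, and let $g,d_F,\mathcal A_\alpha,\rho_\alpha,\mathcal P_{\mathrm{St}}$ be as in the context. For every $\alpha>0$ there exist constants $\beta_3>0$ and $\beta_4>0$ such that for every $\mathbf X^0\in\mathrm{St}(d,K)$ and every sequence generated by $\mathbf X^{t+1}\in\mathcal P_{\mathrm{St}}(\mathcal A_\alpha(\mathbf X^t))$, the following hold for all $t\ge0$: (a) $g(\mathbf X^{t+1})-g(\mathbf X^t)\ge\alpha\|\mathbf X^t-\mathbf X^{t+1}\|_F^2$; (b) $g(\mathbf Q)-g(\mathbf X^t)\le\beta_3\,d_F^2(\mathbf X^t,\mathbf Q)$; (c) $\rho_\alpha(\mathbf X^t)\le\beta_4\|\mathbf X^{t+1}-\mathbf X^t\|_F$.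
   Context: $\mathrm{St}(d,K)=\{\mathbf X\in\mathbb R^{d\times K}:\mathbf X^\top\mathbf X=\mathbf I_K\}$. $g(\mathbf X)=\mathrm{tr}(\mathbf X^\top\mathbf Q\boldsymbol\Theta^2\mathbf Q^\top\mathbf X\,\mathrm{diag}(a_1,\dots,a_K))$. $d_F(\mathbf X,\mathbf Q)=\min_{\mathbf q\in\{1,-1\}^K}\|\mathbf X-\mathbf Q\,\mathrm{diag}(\mathbf q)\|_F$. $\mathcal A_\alpha(\mathbf X)=\alpha\mathbf X+\mathbf Q\boldsymbol\Theta^2\mathbf Q^\top\mathbf X\,\mathrm{diag}(a_1,\dots,a_K)$. $\rho_\alpha(\mathbf X)=\|\mathbf X\mathbf V\boldsymbol\Sigma\mathbf V^\top-\mathcal A_\alpha(\mathbf X)\|_F$ where $\mathcal A_\alpha(\mathbf X)=\mathbf U\boldsymbol\Sigma\mathbf V^\top$ is a thin SVD (equivalently $\mathbf V\boldsymbol\Sigma\mathbf V^\top=(\mathcal A_\alpha(\mathbf X)^\top\mathcal A_\alpha(\mathbf X))^{1/2}$). $\mathcal P_{\mathrm{St}}(\mathbf Y)$ is the set of Frobenius-nearest points of $\mathrm{St}(d,K)$ to $\mathbf Y$. *)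

theory Defs
  imports Complex_Main "Jordan_Normal_Form.Matrix"
begin

(* Matrices are Jordan_Normal_Form matrices (real mat); indices start at 0. *)

definition trace_mat :: "real mat \<Rightarrow> real" where
  "trace_mat A = (\<Sum>i<dim_row A. A $$ (i, i))"

definition frob_norm :: "real mat \<Rightarrow> real" where
  "frob_norm A = sqrt (\<Sum>i<dim_row A. \<Sum>j<dim_col A. (A $$ (i, j))\<^sup>2)"

definition stiefel :: "nat \<Rightarrow> nat \<Rightarrow> real mat set" where
  "stiefel d K = {X. X \<in> carrier_mat d K \<and> transpose_mat X * X = 1\<^sub>m K}"

abbreviation diagm :: "nat \<Rightarrow> (nat \<Rightarrow> real) \<Rightarrow> real mat" where
  "diagm K v \<equiv> mat_diag K v"

text \<open>g(X) = tr(X^T Q Theta^2 Q^T X diag(a)), with Theta^2 = diag(lambda).\<close>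
definition gfun :: "nat \<Rightarrow> real mat \<Rightarrow> (nat \<Rightarrow> real) \<Rightarrow> (nat \<Rightarrow> real) \<Rightarrow> real mat \<Rightarrow> real" where
  "gfun K Q lam a X =
     trace_mat (transpose_mat X * Q * diagm K lam * transpose_mat Q * X * diagm K a)"

definition dF :: "nat \<Rightarrow> real mat \<Rightarrow> real mat \<Rightarrow> real" where
  "dF K X Q = Min ((\<lambda>q. frob_norm (X - Q * diagm K (\<lambda>i. q ! i)))
                   ` {q :: real list. length q = K \<and> set q \<subseteq> {1, -1}})"

definition A_alpha :: "nat \<Rightarrow> real mat \<Rightarrow> (nat \<Rightarrow> real) \<Rightarrow> (nat \<Rightarrow> real) \<Rightarrow> real \<Rightarrow> real mat \<Rightarrow> real mat" where
  "A_alpha K Q lam a \<alpha> X = \<alpha> \<cdot>\<^sub>m X + Q * diagm K lam * transpose_mat Q * X * diagm K a"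

definition psd_mat :: "nat \<Rightarrow> real mat \<Rightarrow> bool" where
  "psd_mat n B \<longleftrightarrow> B \<in> carrier_mat n n \<and> transpose_mat B = B \<and>
     (\<forall>v \<in> carrier_vec n. v \<bullet> (B *\<^sub>v v) \<ge> 0)"

definition psd_sqrt :: "nat \<Rightarrow> real mat \<Rightarrow> real mat" where
  "psd_sqrt n M = (THE B. psd_mat n B \<and> B * B = M)"

text \<open>rho_alpha(X) = || X V Sigma V^T - A_alpha(X) ||_F, V Sigma V^T = (A^T A)^(1/2).\<close>
definition rho_alpha :: "nat \<Rightarrow> real mat \<Rightarrow> (nat \<Rightarrow> real) \<Rightarrow> (nat \<Rightarrow> real) \<Rightarrow> real \<Rightarrow> real mat \<Rightarrow> real" where
  "rho_alpha K Q lam a \<alpha> X =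
     (let A = A_alpha K Q lam a \<alpha> X in
      frob_norm (X * psd_sqrt K (transpose_mat A * A) - A))"

definition P_St :: "nat \<Rightarrow> nat \<Rightarrow> real mat \<Rightarrow> real mat set" where
  "P_St d K Y = {Z \<in> stiefel d K. \<forall>W \<in> stiefel d K. frob_norm (Z - Y) \<le> frob_norm (W - Y)}"

end

(*
  Nearest points of St(d,K) to A are the maximisers of <W, A>. Perturbing such a maximiser Y
  by Givens rotations, Householder reflections and rotations into the orthogonal complement of
  its range shows that H = Y^T A is symmetric positive semidefinite with A = Y H; hence
  H = (A^T A)^(1/2) and rho_alpha(X) = |(X - Y) H| <= |X - Y| |H|, where |H| is bounded
  uniformly on St(d,K). This gives (c).

  With the positive semidefinite self-adjoint map N X = Q Theta^2 Q^T X diag(a) we have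
  g(X) = <X, N X>, so g(Y) - g(X) >= 2 <Y - X, N X> = 2 <Y - X, A_alpha(X)> + alpha |X - Y|^2,
  and <Y - X, A_alpha(X)> >= 0 because Y maximises <W, A_alpha(X)>. This gives (a).

  For (b), write w_lk = <q_l, x_k>. Then g(Q) - g(X) <= sum_k a_k lambda_k (1 - w_kk^2), and
  1 - w_kk^2 <= |x_k - s_k q_k|^2 for every sign s_k.
*)
theory Submission
  imports Defs "HOL-Analysis.Convex" "HOL-Analysis.L2_Norm"
begin

lemma index_mult_mat_sum:
  assumes "i < dim_row A" "j < dim_col B" "dim_col A = dim_row B"
  shows "(A * B) $$ (i, j) = (\<Sum>k<dim_row B. A $$ (i, k) * B $$ (k, j))"
  using assms by (simp add: scalar_prod_def atLeast0LessThan)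

lemma dim_mat_diag [simp]: "dim_row (mat_diag n f) = n" "dim_col (mat_diag n f) = n"
  by (simp_all add: mat_diag_def)

lemma index_mult_mat_diag_right:
  assumes "M \<in> carrier_mat m n" "i < m" "k < n"
  shows "(M * mat_diag n f) $$ (i, k) = M $$ (i, k) * f k"
  using assms by (simp add: mat_diag_mult_right[OF assms(1)])

definition col_inner :: "nat \<Rightarrow> real mat \<Rightarrow> real mat \<Rightarrow> nat \<Rightarrow> nat \<Rightarrow> real" where
  "col_inner d A B k l = (\<Sum>i<d. A $$ (i, k) * B $$ (i, l))"

lemma index_transpose_mult:
  assumes "A \<in> carrier_mat d m" "B \<in> carrier_mat d n" "k < m" "l < n"
  shows "(transpose_mat A * B) $$ (k, l) = col_inner d A B k l"
  using assms by (simp add: index_mult_mat_sum col_inner_def del: index_mult_mat(1))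

definition frob_inner :: "nat \<Rightarrow> nat \<Rightarrow> real mat \<Rightarrow> real mat \<Rightarrow> real" where
  "frob_inner d K A B = (\<Sum>i<d. \<Sum>k<K. A $$ (i, k) * B $$ (i, k))"

lemma frob_inner_commute: "frob_inner d K A B = frob_inner d K B A"
  unfolding frob_inner_def by (simp add: mult.commute)

lemma frob_inner_eq_sum_col_inner: "frob_inner d K A B = (\<Sum>k<K. col_inner d A B k k)"
  unfolding frob_inner_def col_inner_def by (rule sum.swap)

lemma trace_transpose_mult:
  assumes "A \<in> carrier_mat d K" "B \<in> carrier_mat d K"
  shows "trace_mat (transpose_mat A * B) = frob_inner d K A B"
  using assms by (simp add: trace_mat_def frob_inner_eq_sum_col_inner index_transpose_mult
      del: index_mult_mat(1))

lemma frob_inner_diff_self: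
  assumes "A \<in> carrier_mat d K" "B \<in> carrier_mat d K"
  shows "frob_inner d K (A - B) (A - B) = frob_inner d K A A - 2 * frob_inner d K A B + frob_inner d K B B"
proof -
  have "frob_inner d K (A - B) (A - B) =
      (\<Sum>i<d. \<Sum>k<K. A $$ (i, k) * A $$ (i, k) - 2 * (A $$ (i, k) * B $$ (i, k)) + B $$ (i, k) * B $$ (i, k))"
    unfolding frob_inner_def using assms by (intro sum.cong refl) (simp add: algebra_simps)
  then show ?thesis
    unfolding frob_inner_def by (simp add: sum.distrib sum_subtractf sum_distrib_left)
qed

lemma frob_norm_eq_L2_set:
  "frob_norm M = L2_set (($$) M) ({..<dim_row M} \<times> {..<dim_col M})"
  unfolding frob_norm_def L2_set_def by (simp add: sum.cartesian_product case_prod_beta)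

lemma frob_norm_nonneg: "0 \<le> frob_norm M"
  by (simp add: frob_norm_eq_L2_set)

lemma frob_norm_sq: "(frob_norm M)\<^sup>2 = (\<Sum>i<dim_row M. \<Sum>j<dim_col M. (M $$ (i, j))\<^sup>2)"
  unfolding frob_norm_def by (simp add: sum_nonneg)

lemma frob_norm_sq_frob_inner:
  "M \<in> carrier_mat d K \<Longrightarrow> (frob_norm M)\<^sup>2 = frob_inner d K M M"
  unfolding frob_norm_sq frob_inner_def by (simp add: power2_eq_square)

lemma frob_norm_minus_commute:
  assumes "A \<in> carrier_mat d K" "B \<in> carrier_mat d K"
  shows "frob_norm (A - B) = frob_norm (B - A)"
proof -
  have "(frob_norm (A - B))\<^sup>2 = (frob_norm (B - A))\<^sup>2"
    using assms by (simp add: frob_norm_sq power2_commute)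
  then show ?thesis
    using frob_norm_nonneg power2_eq_iff_nonneg by blast
qed

lemma frob_norm_add_le:
  assumes "A \<in> carrier_mat m n" "B \<in> carrier_mat m n"
  shows "frob_norm (A + B) \<le> frob_norm A + frob_norm B"
proof -
  have "frob_norm (A + B) = L2_set (\<lambda>x. A $$ x + B $$ x) ({..<m} \<times> {..<n})"
    unfolding frob_norm_eq_L2_set using assms by (intro L2_set_cong) auto
  also have "\<dots> \<le> frob_norm A + frob_norm B"
    using L2_set_triangle_ineq[of "($$) A" "($$) B"] assms by (simp add: frob_norm_eq_L2_set)
  finally show ?thesis .
qed

lemma frob_norm_smult: "frob_norm (c \<cdot>\<^sub>m M) = \<bar>c\<bar> * frob_norm M"
  unfolding frob_norm_def
  by (simp add: power_mult_distrib real_sqrt_mult flip: sum_distrib_left)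

lemma frob_norm_transpose: "frob_norm (transpose_mat M) = frob_norm M"
  unfolding frob_norm_def by (simp add: sum.swap[of _ "{..<dim_col M}"])

lemma frob_norm_mult_le:
  assumes "dim_col A = dim_row B"
  shows "frob_norm (A * B) \<le> frob_norm A * frob_norm B"
proof -
  let ?n = "dim_row A" and ?m = "dim_row B" and ?p = "dim_col B"
  have "(frob_norm (A * B))\<^sup>2 = (\<Sum>i<?n. \<Sum>j<?p. (\<Sum>k<?m. A $$ (i, k) * B $$ (k, j))\<^sup>2)"
    unfolding frob_norm_sq using assms by (simp add: index_mult_mat_sum del: index_mult_mat(1))
  also have "\<dots> \<le> (\<Sum>i<?n. \<Sum>j<?p. (\<Sum>k<?m. (A $$ (i, k))\<^sup>2) * (\<Sum>k<?m. (B $$ (k, j))\<^sup>2))"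
    by (intro sum_mono Cauchy_Schwarz_ineq_sum)
  also have "\<dots> = (frob_norm A * frob_norm B)\<^sup>2"
    unfolding power_mult_distrib frob_norm_sq using assms
    by (simp add: sum_product sum.swap[of _ "{..<?p}"])
  finally show ?thesis
    using frob_norm_nonneg power2_le_imp_le by (metis mult_nonneg_nonneg)
qed

lemma stiefel_carrier: "X \<in> stiefel d K \<Longrightarrow> X \<in> carrier_mat d K"
  by (simp add: stiefel_def)

lemma stiefel_col_inner:
  assumes "X \<in> stiefel d K" "k < K" "l < K"
  shows "col_inner d X X k l = (if k = l then 1 else 0)"
  using assms index_transpose_mult[of X d K X K k l] by (simp add: stiefel_def)

lemma stiefelI:
  assumes X: "X \<in> carrier_mat d K"
    and orth: "\<And>k l. k < K \<Longrightarrow> l < K \<Longrightarrow> col_inner d X X k l = (if k = l then 1 else 0)"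
  shows "X \<in> stiefel d K"
proof -
  have "transpose_mat X * X = 1\<^sub>m K"
    using X orth by (intro eq_matI) (auto simp: index_transpose_mult[OF X X] simp del: index_mult_mat(1))
  with X show ?thesis by (simp add: stiefel_def)
qed

lemma frob_inner_stiefel_self: "X \<in> stiefel d K \<Longrightarrow> frob_inner d K X X = real K"
  by (simp add: frob_inner_eq_sum_col_inner stiefel_col_inner)

lemma frob_norm_stiefel:
  assumes "X \<in> stiefel d K"
  shows "frob_norm X = sqrt (real K)"
proof -
  have "(frob_norm X)\<^sup>2 = real K"
    using assms by (simp add: frob_norm_sq_frob_inner[OF stiefel_carrier] frob_inner_stiefel_self)
  then show ?thesis
    by (rule real_sqrt_unique[symmetric, OF _ frob_norm_nonneg])
qed

lemma frob_norm_diff_stiefel_sq: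
  assumes "X \<in> stiefel d K" "Y \<in> stiefel d K"
  shows "(frob_norm (X - Y))\<^sup>2 = 2 * real K - 2 * frob_inner d K X Y"
proof -
  have X: "X \<in> carrier_mat d K" and Y: "Y \<in> carrier_mat d K"
    using assms by (simp_all add: stiefel_carrier)
  show ?thesis
    using frob_inner_diff_self[OF X Y] frob_norm_sq_frob_inner[OF minus_carrier_mat[OF Y], of X]
    by (simp add: frob_inner_stiefel_self assms)
qed

lemma P_St_stiefel: "Y \<in> P_St d K A \<Longrightarrow> Y \<in> stiefel d K"
  by (simp add: P_St_def)

lemma P_St_maximizes_frob_inner:
  assumes Y: "Y \<in> P_St d K A" and A: "A \<in> carrier_mat d K" and W: "W \<in> stiefel d K"
  shows "frob_inner d K W A \<le> frob_inner d K Y A"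
proof -
  have Ys: "Y \<in> stiefel d K" using Y by (rule P_St_stiefel)
  have "frob_norm (Y - A) \<le> frob_norm (W - A)"
    using Y W by (simp add: P_St_def)
  then have "(frob_norm (Y - A))\<^sup>2 \<le> (frob_norm (W - A))\<^sup>2"
    by (simp add: frob_norm_nonneg power_mono)
  moreover have "(frob_norm (Z - A))\<^sup>2 = real K - 2 * frob_inner d K Z A + frob_inner d K A A"
    if "Z \<in> stiefel d K" for Z
    using that A frob_inner_diff_self[OF stiefel_carrier[OF that] A]
    by (simp add: frob_norm_sq_frob_inner[OF minus_carrier_mat[OF A]] frob_inner_stiefel_self)
  ultimately show ?thesis
    using Ys W by simp
qed

lemma gram_operator_carrier:
  assumes Q: "Q \<in> carrier_mat d K" and X: "X \<in> carrier_mat d K"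
  shows "Q * diagm K lam * transpose_mat Q \<in> carrier_mat d d"
    and "Q * diagm K lam * transpose_mat Q * X * diagm K a \<in> carrier_mat d K"
proof -
  show QDQ: "Q * diagm K lam * transpose_mat Q \<in> carrier_mat d d"
    using mult_carrier_mat[OF mult_carrier_mat[OF Q mat_diag_dim] transpose_carrier_mat[THEN iffD2, OF Q]] .
  show "Q * diagm K lam * transpose_mat Q * X * diagm K a \<in> carrier_mat d K"
    using mult_carrier_mat[OF mult_carrier_mat[OF QDQ X] mat_diag_dim] .
qed

lemma A_alpha_carrier:
  "Q \<in> carrier_mat d K \<Longrightarrow> X \<in> carrier_mat d K \<Longrightarrow> A_alpha K Q lam a \<alpha> X \<in> carrier_mat d K"
  unfolding A_alpha_def by (simp add: gram_operator_carrier)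

lemma index_gram_operator:
  assumes Q: "Q \<in> carrier_mat d K" and X: "X \<in> carrier_mat d K" and "i < d" "k < K"
  shows "(Q * diagm K lam * transpose_mat Q * X * diagm K a) $$ (i, k)
     = a k * (\<Sum>l<K. Q $$ (i, l) * lam l * col_inner d Q X l k)"
proof -
  note QDQ = gram_operator_carrier(1)[OF Q X, of lam]
  have "(Q * diagm K lam * transpose_mat Q * X) $$ (i, k)
      = (\<Sum>j<d. (\<Sum>l<K. Q $$ (i, l) * lam l * Q $$ (j, l)) * X $$ (j, k))"
    using assms QDQ by (simp add: index_mult_mat_sum mat_diag_mult_right[OF Q] del: index_mult_mat(1))
  also have "\<dots> = (\<Sum>l<K. Q $$ (i, l) * lam l * col_inner d Q X l k)"
    unfolding col_inner_def
    by (simp add: sum_distrib_left sum_distrib_right mult.assoc sum.swap[of _ "{..<d}"])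
  finally show ?thesis
    using index_mult_mat_diag_right[OF mult_carrier_mat[OF QDQ X] assms(3,4)]
    by (simp add: mult.commute del: index_mult_mat(1))
qed

lemma frob_inner_gram_operator:
  assumes Q: "Q \<in> carrier_mat d K" and X: "X \<in> carrier_mat d K"
  shows "frob_inner d K Z (Q * diagm K lam * transpose_mat Q * X * diagm K a)
     = (\<Sum>k<K. a k * (\<Sum>l<K. lam l * col_inner d Q Z l k * col_inner d Q X l k))"
proof -
  have "frob_inner d K Z (Q * diagm K lam * transpose_mat Q * X * diagm K a)
     = (\<Sum>i<d. \<Sum>k<K. \<Sum>l<K. (a k * lam l * col_inner d Q X l k) * (Q $$ (i, l) * Z $$ (i, k)))"
    unfolding frob_inner_def
    by (intro sum.cong refl) (simp add: index_gram_operator[OF Q X] sum_distrib_left mult_ac)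
  also have "\<dots> = (\<Sum>k<K. \<Sum>l<K. (a k * lam l * col_inner d Q X l k) * col_inner d Q Z l k)"
    by (simp add: col_inner_def sum_distrib_left sum.swap[of _ "{..<d}"])
  finally show ?thesis
    by (simp add: sum_distrib_left mult_ac)
qed

lemma gfun_eq_frob_inner:
  assumes Q: "Q \<in> carrier_mat d K" and X: "X \<in> carrier_mat d K"
  shows "gfun K Q lam a X = frob_inner d K X (Q * diagm K lam * transpose_mat Q * X * diagm K a)"
proof -
  have XT: "transpose_mat X \<in> carrier_mat K d" and QT: "transpose_mat Q \<in> carrier_mat K d"
    using Q X by simp_all
  have D: "diagm K f \<in> carrier_mat K K" for f
    by simp
  note QDQ = gram_operator_carrier(1)[OF Q X, of lam]
  have "transpose_mat X * Q * diagm K lam = transpose_mat X * (Q * diagm K lam)"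
    using assoc_mult_mat[OF XT Q D] .
  also have "\<dots> * transpose_mat Q = transpose_mat X * (Q * diagm K lam * transpose_mat Q)"
    using assoc_mult_mat[OF XT _ QT] Q by simp
  also have "\<dots> * X = transpose_mat X * (Q * diagm K lam * transpose_mat Q * X)"
    using assoc_mult_mat[OF XT QDQ X] .
  also have "\<dots> * diagm K a = transpose_mat X * (Q * diagm K lam * transpose_mat Q * X * diagm K a)"
    using assoc_mult_mat[OF XT _ D] QDQ X by simp
  finally show ?thesis
    unfolding gfun_def using X by (simp add: trace_transpose_mult gram_operator_carrier(2)[OF Q X])
qed

lemma gfun_eq_sum:
  assumes "Q \<in> carrier_mat d K" "X \<in> carrier_mat d K"
  shows "gfun K Q lam a X = (\<Sum>k<K. a k * (\<Sum>l<K. lam l * (col_inner d Q X l k)\<^sup>2))"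
  using assms by (simp add: gfun_eq_frob_inner frob_inner_gram_operator power2_eq_square mult.assoc)

lemma gfun_Q:
  assumes "Q \<in> stiefel d K"
  shows "gfun K Q lam a Q = (\<Sum>k<K. a k * lam k)"
proof -
  have "lam l * (col_inner d Q Q l k)\<^sup>2 = (if l = k then lam k else 0)" if "l < K" "k < K" for l k
    using assms that by (simp add: stiefel_col_inner)
  then show ?thesis
    using assms by (simp add: gfun_eq_sum[OF stiefel_carrier stiefel_carrier])
qed

lemma frob_inner_A_alpha:
  assumes "Q \<in> carrier_mat d K" "X \<in> carrier_mat d K"
  shows "frob_inner d K Z (A_alpha K Q lam a \<alpha> X)
    = \<alpha> * frob_inner d K Z X + (\<Sum>k<K. a k * (\<Sum>l<K. lam l * col_inner d Q Z l k * col_inner d Q X l k))"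
proof -
  have "frob_inner d K Z (A_alpha K Q lam a \<alpha> X)
      = \<alpha> * frob_inner d K Z X + frob_inner d K Z (Q * diagm K lam * transpose_mat Q * X * diagm K a)"
    unfolding frob_inner_def A_alpha_def using assms
    by (simp add: algebra_simps sum.distrib sum_distrib_left del: index_mult_mat(1))
  then show ?thesis
    using assms by (simp add: frob_inner_gram_operator)
qed

lemma gfun_ascent:
  assumes Q: "Q \<in> carrier_mat d K" and X: "X \<in> stiefel d K"
    and Y: "Y \<in> P_St d K (A_alpha K Q lam a \<alpha> X)"
    and lam: "\<And>l. l < K \<Longrightarrow> 0 \<le> lam l" and a: "\<And>k. k < K \<Longrightarrow> 0 \<le> a k"
  shows "\<alpha> * (frob_norm (X - Y))\<^sup>2 \<le> gfun K Q lam a Y - gfun K Q lam a X"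
proof -
  have Xc: "X \<in> carrier_mat d K" and Ys: "Y \<in> stiefel d K" and Yc: "Y \<in> carrier_mat d K"
    using X Y by (simp_all add: stiefel_carrier P_St_stiefel)
  define wX where "wX = col_inner d Q X"
  define wY where "wY = col_inner d Q Y"
  \<comment> \<open>B (col_inner d Q Z) = <Z, N X> for N X = Q Theta^2 Q^T X diag(a)\<close>
  define B where "B w = (\<Sum>k<K. a k * (\<Sum>l<K. lam l * w l k * wX l k))" for w
  have "frob_inner d K X (A_alpha K Q lam a \<alpha> X) \<le> frob_inner d K Y (A_alpha K Q lam a \<alpha> X)"
    using P_St_maximizes_frob_inner[OF Y A_alpha_carrier[OF Q Xc] X] .
  then have maximal: "\<alpha> * real K + B wX \<le> \<alpha> * frob_inner d K Y X + B wY"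
    unfolding frob_inner_A_alpha[OF Q Xc] B_def wX_def wY_def frob_inner_stiefel_self[OF X] .
  have "gfun K Q lam a Y - gfun K Q lam a X - 2 * B wY + 2 * B wX
      = (\<Sum>k<K. a k * (\<Sum>l<K. lam l * (wY l k - wX l k)\<^sup>2))"
    unfolding gfun_eq_sum[OF Q Xc] gfun_eq_sum[OF Q Yc] B_def wX_def wY_def
    by (simp add: sum_subtractf[symmetric] sum.distrib[symmetric] sum_distrib_left
        power2_eq_square algebra_simps)
  also have "\<dots> \<ge> 0"
    using lam a by (intro sum_nonneg mult_nonneg_nonneg) auto
  finally have "2 * (B wY - B wX) \<le> gfun K Q lam a Y - gfun K Q lam a X"
    by simp
  moreover have "\<alpha> * (frob_norm (X - Y))\<^sup>2 = 2 * (\<alpha> * real K - \<alpha> * frob_inner d K Y X)"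
    by (simp add: frob_norm_diff_stiefel_sq[OF X Ys] frob_inner_commute[of d K X Y] algebra_simps)
  ultimately show ?thesis
    using maximal by argo
qed

lemma dF_attained:
  obtains s where "\<And>k. k < K \<Longrightarrow> (s k)\<^sup>2 = 1" and "dF K X Q = frob_norm (X - Q * diagm K s)"
proof -
  define S where "S = {q :: real list. length q = K \<and> set q \<subseteq> {1, -1}}"
  have "S = {q. set q \<subseteq> {1, -1} \<and> length q = K}"
    unfolding S_def by auto
  then have "finite S"
    using finite_lists_length_eq[of "{1, -1 :: real}" K] by simp
  moreover have "replicate K 1 \<in> S"
    unfolding S_def by auto
  ultimately obtain q where q: "q \<in> S" and "dF K X Q = frob_norm (X - Q * diagm K (\<lambda>i. q ! i))"
    unfolding dF_def S_def[symmetric] using Min_in[of "(\<lambda>q. frob_norm (X - Q * diagm K (\<lambda>i. q ! i))) ` S"]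
    by blast
  moreover have "(q ! k)\<^sup>2 = 1" if "k < K" for k
  proof -
    have "q ! k \<in> set q"
      using q that unfolding S_def by simp
    then show ?thesis
      using q unfolding S_def by auto
  qed
  ultimately show ?thesis
    using that by blast
qed

lemma stiefel_col_gap_le_col_dist:
  assumes Q: "Q \<in> stiefel d K" and X: "X \<in> stiefel d K" and k: "k < K" and s: "s\<^sup>2 = 1"
  shows "1 - (col_inner d Q X k k)\<^sup>2 \<le> (\<Sum>i<d. (X $$ (i, k) - Q $$ (i, k) * s)\<^sup>2)"
proof -
  let ?w = "col_inner d Q X k k"
  have "(\<Sum>i<d. (X $$ (i, k) - Q $$ (i, k) * s)\<^sup>2)
      = col_inner d X X k k - 2 * s * ?w + s\<^sup>2 * col_inner d Q Q k k"
    unfolding col_inner_def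
    by (simp add: power2_eq_square algebra_simps sum.distrib sum_subtractf sum_distrib_left)
  also have "\<dots> = 1 - (?w)\<^sup>2 + (s - ?w)\<^sup>2"
    using k s by (simp add: stiefel_col_inner[OF X] stiefel_col_inner[OF Q] power2_diff)
  finally show ?thesis
    by simp
qed

lemma gfun_gap_le_sign_dist:
  assumes Q: "Q \<in> stiefel d K" and X: "X \<in> stiefel d K"
    and lam: "\<And>l. l < K \<Longrightarrow> 0 \<le> lam l" and a: "\<And>k. k < K \<Longrightarrow> 0 \<le> a k"
    and s: "\<And>k. k < K \<Longrightarrow> (s k)\<^sup>2 = 1"
  shows "gfun K Q lam a Q - gfun K Q lam a X
    \<le> (\<Sum>k<K. a k * lam k) * (frob_norm (X - Q * diagm K s))\<^sup>2"
proof -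
  have Qc: "Q \<in> carrier_mat d K" and Xc: "X \<in> carrier_mat d K"
    using Q X by (simp_all add: stiefel_carrier)
  define w where "w l k = col_inner d Q X l k" for l k
  define e where "e k = (\<Sum>i<d. (X $$ (i, k) - Q $$ (i, k) * s k)\<^sup>2)" for k
  have "gfun K Q lam a Q - gfun K Q lam a X = (\<Sum>k<K. a k * lam k - a k * (\<Sum>l<K. lam l * (w l k)\<^sup>2))"
    unfolding w_def by (simp add: gfun_Q[OF Q] gfun_eq_sum[OF Qc Xc] sum_subtractf)
  also have "\<dots> \<le> (\<Sum>k<K. a k * lam k * (1 - (w k k)\<^sup>2))"
  proof (rule sum_mono)
    fix k assume "k \<in> {..<K}"
    then have "a k * (lam k * (w k k)\<^sup>2) \<le> a k * (\<Sum>l<K. lam l * (w l k)\<^sup>2)"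
      using lam a by (intro mult_left_mono member_le_sum) auto
    then show "a k * lam k - a k * (\<Sum>l<K. lam l * (w l k)\<^sup>2) \<le> a k * lam k * (1 - (w k k)\<^sup>2)"
      by (simp add: algebra_simps)
  qed
  also have "\<dots> \<le> (\<Sum>k<K. a k * lam k * e k)"
    unfolding w_def e_def using lam a s Q X
    by (intro sum_mono mult_left_mono stiefel_col_gap_le_col_dist mult_nonneg_nonneg) auto
  also have "\<dots> \<le> (\<Sum>k<K. (\<Sum>k<K. a k * lam k) * e k)"
    unfolding e_def using lam a
    by (intro sum_mono mult_right_mono member_le_sum mult_nonneg_nonneg sum_nonneg) auto
  also have "\<dots> = (\<Sum>k<K. a k * lam k) * (frob_norm (X - Q * diagm K s))\<^sup>2"
  proof -
    have "(frob_norm (X - Q * diagm K s))\<^sup>2 = (\<Sum>i<d. \<Sum>k<K. (X $$ (i, k) - Q $$ (i, k) * s k)\<^sup>2)"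
      unfolding frob_norm_sq using Qc Xc by (simp add: index_mult_mat_diag_right[OF Qc] del: index_mult_mat(1))
    then show ?thesis
      unfolding e_def by (simp add: sum_distrib_left sum.swap[of _ "{..<d}"])
  qed
  finally show ?thesis .
qed

lemma gfun_gap_le_dF:
  assumes "Q \<in> stiefel d K" "X \<in> stiefel d K"
    and "\<And>l. l < K \<Longrightarrow> 0 \<le> lam l" "\<And>k. k < K \<Longrightarrow> 0 \<le> a k"
  shows "gfun K Q lam a Q - gfun K Q lam a X \<le> (\<Sum>k<K. a k * lam k) * (dF K X Q)\<^sup>2"
proof -
  obtain s where "\<And>k. k < K \<Longrightarrow> (s k)\<^sup>2 = 1" and "dF K X Q = frob_norm (X - Q * diagm K s)"
    using dF_attained by blast
  then show ?thesis
    using gfun_gap_le_sign_dist[OF assms] by simp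
qed

lemma linear_coeff_zero_if_quadratic_nonpos:
  fixes x y :: real
  assumes "\<And>t. t * y - t\<^sup>2 * x \<le> 0"
  shows "y = 0"
proof (rule ccontr)
  assume "y \<noteq> 0"
  define u where "u = \<bar>x\<bar> + 1"
  have "0 < u" "0 < u - x"
    unfolding u_def by linarith+
  then have "y / u * y - (y / u)\<^sup>2 * x = y\<^sup>2 * (u - x) / u\<^sup>2"
    by (simp add: field_simps power2_eq_square)
  also have "\<dots> > 0"
    using \<open>y \<noteq> 0\<close> \<open>0 < u\<close> \<open>0 < u - x\<close> by simp
  finally show False
    using assms[of "y / u"] by simp
qed

lemma circle_stationary_coeff_zero:
  fixes x y :: real
  assumes "\<And>c s. c\<^sup>2 + s\<^sup>2 = 1 \<Longrightarrow> (c - 1) * x + s * y \<le> 0"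
  shows "y = 0"
proof (rule linear_coeff_zero_if_quadratic_nonpos)
  fix t :: real
  define q where "q = 1 + t\<^sup>2"
  define c s where "c = (1 - t\<^sup>2) / q" and "s = 2 * t / q"
  have "0 < q"
    unfolding q_def by (simp add: add_pos_nonneg)
  have "(1 - t\<^sup>2)\<^sup>2 + (2 * t)\<^sup>2 = q\<^sup>2"
    unfolding q_def by (simp add: power2_eq_square algebra_simps)
  then have "c\<^sup>2 + s\<^sup>2 = 1"
    unfolding c_def s_def using \<open>0 < q\<close> by (simp add: power_divide add_divide_distrib[symmetric])
  then have "(c - 1) * x + s * y \<le> 0"
    by (rule assms)
  have "c - 1 = - 2 * t\<^sup>2 / q"
    unfolding c_def using \<open>0 < q\<close> by (simp add: q_def field_simps)
  then have "(c - 1) * x + s * y = - 2 * t\<^sup>2 / q * x + 2 * t / q * y"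
    unfolding s_def by simp
  also have "\<dots> = 2 * (t * y - t\<^sup>2 * x) / q"
    using \<open>0 < q\<close> by (simp add: field_simps)
  finally have "2 * (t * y - t\<^sup>2 * x) / q \<le> 0"
    using \<open>(c - 1) * x + s * y \<le> 0\<close> by simp
  then show "t * y - t\<^sup>2 * x \<le> 0"
    unfolding pos_divide_le_eq[OF \<open>0 < q\<close>] by simp
qed

lemma stiefel_col_inner_combination:
  assumes Y: "Y \<in> stiefel d K" and "i < K" "j < K" "k < K" "l < K"
  shows "(\<Sum>r<d. (x1 * Y $$ (r, i) + x2 * Y $$ (r, j)) * (z1 * Y $$ (r, k) + z2 * Y $$ (r, l)))
       = x1 * z1 * (if i = k then 1 else 0) + x1 * z2 * (if i = l then 1 else 0)
         + x2 * z1 * (if j = k then 1 else 0) + x2 * z2 * (if j = l then 1 else 0)"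
proof -
  have "(\<Sum>r<d. (x1 * Y $$ (r, i) + x2 * Y $$ (r, j)) * (z1 * Y $$ (r, k) + z2 * Y $$ (r, l)))
     = x1 * z1 * col_inner d Y Y i k + x1 * z2 * col_inner d Y Y i l
       + x2 * z1 * col_inner d Y Y j k + x2 * z2 * col_inner d Y Y j l"
    unfolding col_inner_def by (simp add: algebra_simps sum.distrib sum_distrib_left)
  then show ?thesis
    using assms by (simp add: stiefel_col_inner)
qed

lemma givens_rotation_stiefel:
  assumes Y: "Y \<in> stiefel d K" and ij: "i < K" "j < K" "i \<noteq> j" and cs: "c\<^sup>2 + s\<^sup>2 = 1"
  shows "mat d K (\<lambda>(r, m). if m = i then c * Y $$ (r, i) - s * Y $$ (r, j)
      else if m = j then s * Y $$ (r, i) + c * Y $$ (r, j) else Y $$ (r, m)) \<in> stiefel d K"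
    (is "?W \<in> _")
proof (rule stiefelI)
  \<comment> \<open>Column m of the rotation is x1 m * y_(ia m) + x2 m * y_(ib m), uniformly in m.\<close>
  define x1 where "x1 m = (if m = i then c else if m = j then s else 1)" for m
  define x2 where "x2 m = (if m = i then - s else if m = j then c else 0)" for m
  define ia where "ia m = (if m = i \<or> m = j then i else m)" for m
  define ib where "ib m = (if m = i \<or> m = j then j else m)" for m
  have iab: "ia m < K" "ib m < K" if "m < K" for m
    using that ij unfolding ia_def ib_def by auto
  have col: "?W $$ (r, m) = x1 m * Y $$ (r, ia m) + x2 m * Y $$ (r, ib m)" if "r < d" "m < K" for r m
    using that ij(3) unfolding x1_def x2_def ia_def ib_def by auto
  fix m n assume mn: "m < K" "n < K"
  have "col_inner d ?W ?W m n = (\<Sum>r<d. (x1 m * Y $$ (r, ia m) + x2 m * Y $$ (r, ib m))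
      * (x1 n * Y $$ (r, ia n) + x2 n * Y $$ (r, ib n)))"
    unfolding col_inner_def using mn by (intro sum.cong refl) (simp add: col del: index_mat)
  also have "\<dots> = (if m = n then 1 else 0)"
    unfolding stiefel_col_inner_combination[OF Y iab[OF mn(1)] iab[OF mn(2)]]
    using cs ij(3) unfolding x1_def x2_def ia_def ib_def by (auto simp: power2_eq_square algebra_simps)
  finally show "col_inner d ?W ?W m n = (if m = n then 1 else 0)" .
qed simp

text \<open>The matrix below is Y (I - 2 f f^T / S) with S = |f|^2.\<close>
lemma householder_reflection_stiefel:
  assumes Y: "Y \<in> stiefel d K" and S: "(\<Sum>p<K. (f p)\<^sup>2) = S" "S \<noteq> 0"
  shows "mat d K (\<lambda>(r, m). Y $$ (r, m) - 2 / S * f m * (\<Sum>p<K. f p * Y $$ (r, p))) \<in> stiefel d K"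
    (is "?W \<in> _")
proof (rule stiefelI)
  define v where "v r = (\<Sum>p<K. f p * Y $$ (r, p))" for r
  have Yv: "(\<Sum>r<d. Y $$ (r, m) * v r) = f m" if "m < K" for m
  proof -
    have "(\<Sum>r<d. Y $$ (r, m) * v r) = (\<Sum>p<K. f p * col_inner d Y Y p m)"
      unfolding v_def col_inner_def by (simp add: sum_distrib_left sum.swap[of _ "{..<d}"] mult_ac)
    then show ?thesis
      using that by (simp add: stiefel_col_inner[OF Y] if_distrib cong: if_cong)
  qed
  have vv: "(\<Sum>r<d. v r * v r) = S"
  proof -
    have "(\<Sum>r<d. v r * v r) = (\<Sum>p<K. f p * (\<Sum>r<d. Y $$ (r, p) * v r))"
      by (subst (1) v_def) (simp add: sum_distrib_right sum_distrib_left sum.swap[of _ "{..<d}"] mult_ac)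
    then show ?thesis
      using S(1) by (simp add: Yv power2_eq_square)
  qed
  fix m n assume mn: "m < K" "n < K"
  have "col_inner d ?W ?W m n = col_inner d Y Y m n - 2 / S * f n * (\<Sum>r<d. Y $$ (r, m) * v r)
      - 2 / S * f m * (\<Sum>r<d. Y $$ (r, n) * v r) + 4 / S\<^sup>2 * f m * f n * (\<Sum>r<d. v r * v r)"
    unfolding v_def[symmetric] col_inner_def using mn
    by (simp add: algebra_simps power2_eq_square sum.distrib sum_subtractf sum_distrib_left sum_divide_distrib)
  then show "col_inner d ?W ?W m n = (if m = n then 1 else 0)"
    using mn S(2) by (simp add: Yv vv stiefel_col_inner[OF Y] power2_eq_square)
qed simp

lemma column_rotation_stiefel:
  assumes Y: "Y \<in> stiefel d K" and i: "i < K" and cs: "c\<^sup>2 + s\<^sup>2 = 1"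
    and q_unit: "(\<Sum>r<d. (q r)\<^sup>2) = 1" and q_orth: "\<And>k. k < K \<Longrightarrow> (\<Sum>r<d. q r * Y $$ (r, k)) = 0"
  shows "mat d K (\<lambda>(r, m). if m = i then c * Y $$ (r, i) + s * q r else Y $$ (r, m)) \<in> stiefel d K"
    (is "?W \<in> _")
proof (rule stiefelI)
  define z where "z r = c * Y $$ (r, i) + s * q r" for r
  have zY: "(\<Sum>r<d. z r * Y $$ (r, n)) = c * (if i = n then 1 else 0)" if "n < K" for n
  proof -
    have "(\<Sum>r<d. z r * Y $$ (r, n)) = c * col_inner d Y Y i n + s * (\<Sum>r<d. q r * Y $$ (r, n))"
      unfolding z_def col_inner_def by (simp add: algebra_simps sum.distrib sum_distrib_left)
    then show ?thesis
      using stiefel_col_inner[OF Y i that] q_orth[OF that] by simp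
  qed
  have zz: "(\<Sum>r<d. z r * z r) = 1"
  proof -
    have "(\<Sum>r<d. z r * z r)
        = c * (\<Sum>r<d. z r * Y $$ (r, i)) + s * (c * (\<Sum>r<d. q r * Y $$ (r, i)) + s * (\<Sum>r<d. (q r)\<^sup>2))"
      unfolding z_def by (simp add: algebra_simps sum.distrib sum_distrib_left power2_eq_square)
    then show ?thesis
      using zY[OF i] q_orth[OF i] q_unit cs by (simp add: power2_eq_square)
  qed
  fix m n assume mn: "m < K" "n < K"
  show "col_inner d ?W ?W m n = (if m = n then 1 else 0)"
    unfolding z_def[symmetric] col_inner_def using mn zz zY[OF mn(1)] zY[OF mn(2)]
      stiefel_col_inner[OF Y mn, unfolded col_inner_def]
    by (cases "m = i"; cases "n = i") (auto simp: mult.commute)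
qed simp

locale stiefel_maximizer =
  fixes d K :: nat and A Y :: "real mat"
  assumes A_carrier: "A \<in> carrier_mat d K"
    and Y_stiefel: "Y \<in> stiefel d K"
    and maximal: "\<And>W. W \<in> stiefel d K \<Longrightarrow> frob_inner d K W A \<le> frob_inner d K Y A"
begin

lemma maximal_diff: "W \<in> stiefel d K \<Longrightarrow> (\<Sum>m<K. col_inner d W A m m - col_inner d Y A m m) \<le> 0"
  using maximal[of W] by (simp add: frob_inner_eq_sum_col_inner sum_subtractf)

lemma col_inner_symmetric:
  assumes ij: "i < K" "j < K"
  shows "col_inner d Y A i j = col_inner d Y A j i"
proof (cases "i = j")
  case False
  let ?H = "col_inner d Y A"
  have "(c - 1) * (?H i i + ?H j j) + s * (?H i j - ?H j i) \<le> 0" if "c\<^sup>2 + s\<^sup>2 = 1" for c s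
  proof -
    define W where "W = mat d K (\<lambda>(r, m). if m = i then c * Y $$ (r, i) - s * Y $$ (r, j)
      else if m = j then s * Y $$ (r, i) + c * Y $$ (r, j) else Y $$ (r, m))"
    have diff: "col_inner d W A m m - ?H m m = (if m = i then (c - 1) * ?H i i - s * ?H j i
        else if m = j then s * ?H i j + (c - 1) * ?H j j else 0)" if "m < K" for m
      unfolding W_def col_inner_def using that False
      by (simp add: algebra_simps sum.distrib sum_subtractf sum_distrib_left)
    have "(\<Sum>m<K. col_inner d W A m m - ?H m m) = (\<Sum>m\<in>{i, j}. col_inner d W A m m - ?H m m)"
      using ij diff by (intro sum.mono_neutral_right) auto
    then show ?thesis
      using maximal_diff[of W] givens_rotation_stiefel[OF Y_stiefel ij False that] diff ij False
      unfolding W_def[symmetric] by (simp add: algebra_simps)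
  qed
  then show ?thesis
    using circle_stationary_coeff_zero by fastforce
qed simp

lemma col_inner_quadratic_form_nonneg:
  "0 \<le> (\<Sum>p<K. f p * (\<Sum>m<K. col_inner d Y A p m * f m))"
proof (cases "\<forall>p<K. f p = 0")
  case False
  let ?H = "col_inner d Y A"
  define S where "S = (\<Sum>p<K. (f p)\<^sup>2)"
  have "S \<noteq> 0"
    unfolding S_def using False by (auto simp: sum_nonneg_eq_0_iff)
  then have "0 < S"
    unfolding S_def by (simp add: order_less_le sum_nonneg)
  define W where "W = mat d K (\<lambda>(r, m). Y $$ (r, m) - 2 / S * f m * (\<Sum>p<K. f p * Y $$ (r, p)))"
  have "col_inner d W A m m - ?H m m = - 2 / S * (f m * (\<Sum>p<K. f p * ?H p m))" if "m < K" for m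
    unfolding W_def col_inner_def using that
    by (simp add: algebra_simps sum_subtractf sum_distrib_left sum_distrib_right sum_divide_distrib
        sum_negf sum.swap[of _ "{..<d}"])
  then have "0 \<le> 2 / S * (\<Sum>m<K. f m * (\<Sum>p<K. f p * ?H p m))"
    using maximal_diff[of W] householder_reflection_stiefel[OF Y_stiefel S_def[symmetric] \<open>S \<noteq> 0\<close>]
    unfolding W_def[symmetric] by (simp add: sum_distrib_left sum_negf)
  then have "0 \<le> (\<Sum>m<K. f m * (\<Sum>p<K. f p * ?H p m))"
    using \<open>0 < S\<close> by (simp add: zero_le_divide_iff)
  also have "\<dots> = (\<Sum>m<K. \<Sum>p<K. f p * ?H p m * f m)"
    by (simp add: sum_distrib_left mult_ac)
  also have "\<dots> = (\<Sum>p<K. f p * (\<Sum>m<K. ?H p m * f m))"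
    by (subst sum.swap) (simp add: sum_distrib_left mult_ac)
  finally show ?thesis .
qed simp

lemma orthogonal_to_range_inner_zero:
  assumes i: "i < K" and z_orth: "\<And>k. k < K \<Longrightarrow> (\<Sum>r<d. z r * Y $$ (r, k)) = 0"
  shows "(\<Sum>r<d. z r * A $$ (r, i)) = 0"
proof (cases "\<forall>r<d. z r = 0")
  case False
  let ?H = "col_inner d Y A"
  define nz where "nz = (\<Sum>r<d. (z r)\<^sup>2)"
  have "nz \<noteq> 0"
    unfolding nz_def using False by (auto simp: sum_nonneg_eq_0_iff)
  then have "0 < nz"
    unfolding nz_def by (simp add: order_less_le sum_nonneg)
  define q where "q r = z r / sqrt nz" for r
  have q_unit: "(\<Sum>r<d. (q r)\<^sup>2) = 1"
    unfolding q_def using \<open>0 < nz\<close> by (simp add: power_divide nz_def flip: sum_divide_distrib)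
  have q_orth: "(\<Sum>r<d. q r * Y $$ (r, k)) = 0" if "k < K" for k
    using z_orth[OF that] unfolding q_def by (simp flip: sum_divide_distrib)
  have "(c - 1) * ?H i i + s * (\<Sum>r<d. q r * A $$ (r, i)) \<le> 0" if cs: "c\<^sup>2 + s\<^sup>2 = 1" for c s
  proof -
    define W where "W = mat d K (\<lambda>(r, m). if m = i then c * Y $$ (r, i) + s * q r else Y $$ (r, m))"
    have "col_inner d W A m m - ?H m m
        = (if m = i then (c - 1) * ?H i i + s * (\<Sum>r<d. q r * A $$ (r, i)) else 0)" if "m < K" for m
      unfolding W_def col_inner_def using that
      by (simp add: algebra_simps sum.distrib sum_subtractf sum_distrib_left)
    then show ?thesis
      using maximal_diff[of W] column_rotation_stiefel[OF Y_stiefel i cs q_unit q_orth] i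
      unfolding W_def[symmetric] by simp
  qed
  then have "(\<Sum>r<d. q r * A $$ (r, i)) = 0"
    by (rule circle_stationary_coeff_zero)
  then show ?thesis
    using \<open>0 < nz\<close> unfolding q_def by (simp flip: sum_divide_distrib)
qed simp

lemma column_in_range:
  assumes i: "i < K" and r: "r < d"
  shows "A $$ (r, i) = (\<Sum>k<K. Y $$ (r, k) * col_inner d Y A k i)"
proof -
  define h where "h k = col_inner d Y A k i" for k
  define z where "z r = A $$ (r, i) - (\<Sum>k<K. Y $$ (r, k) * h k)" for r
  have z_orth: "(\<Sum>r<d. z r * Y $$ (r, k)) = 0" if k: "k < K" for k
  proof -
    have "(\<Sum>r<d. z r * Y $$ (r, k)) = h k - (\<Sum>l<K. h l * col_inner d Y Y l k)"
      unfolding z_def h_def[of k] col_inner_def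
      by (simp add: algebra_simps sum_subtractf sum_distrib_left sum_distrib_right sum.swap[of _ "{..<d}"])
    then show ?thesis
      using k by (simp add: stiefel_col_inner[OF Y_stiefel] if_distrib cong: if_cong)
  qed
  have "(\<Sum>r<d. (z r)\<^sup>2) = (\<Sum>r<d. z r * A $$ (r, i)) - (\<Sum>k<K. h k * (\<Sum>r<d. z r * Y $$ (r, k)))"
    unfolding power2_eq_square
    by (subst (2) z_def) (simp add: right_diff_distrib sum_subtractf sum_distrib_left
        sum.swap[of _ "{..<d}"] mult_ac)
  also have "\<dots> = 0"
    using z_orth orthogonal_to_range_inner_zero[OF i z_orth] by simp
  finally have "z r = 0"
    using r by (simp add: sum_nonneg_eq_0_iff)
  then show ?thesis
    unfolding z_def h_def by simp
qed

end

lemma psd_matD: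
  assumes "psd_mat n B"
  shows "B \<in> carrier_mat n n"
    and "i < n \<Longrightarrow> j < n \<Longrightarrow> B $$ (i, j) = B $$ (j, i)"
    and "0 \<le> (\<Sum>i<n. v i * (\<Sum>j<n. B $$ (i, j) * v j))"
proof -
  show B: "B \<in> carrier_mat n n"
    using assms by (simp add: psd_mat_def)
  show "B $$ (i, j) = B $$ (j, i)" if "i < n" "j < n"
    using assms B that index_transpose_mat(1)[of j B i] by (simp add: psd_mat_def)
  have "0 \<le> vec n v \<bullet> (B *\<^sub>v vec n v)"
    using assms by (simp add: psd_mat_def)
  also have "\<dots> = (\<Sum>i<n. v i * (\<Sum>j<n. B $$ (i, j) * v j))"
    using B by (simp add: scalar_prod_def mult_mat_vec_def atLeast0LessThan row_def)
  finally show "0 \<le> (\<Sum>i<n. v i * (\<Sum>j<n. B $$ (i, j) * v j))" .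
qed

lemma psd_matI:
  assumes B: "B \<in> carrier_mat n n"
    and sym: "\<And>i j. i < n \<Longrightarrow> j < n \<Longrightarrow> B $$ (i, j) = B $$ (j, i)"
    and nonneg: "\<And>v. 0 \<le> (\<Sum>i<n. v i * (\<Sum>j<n. B $$ (i, j) * v j))"
  shows "psd_mat n B"
proof -
  have "transpose_mat B = B"
    using B sym by (intro eq_matI) auto
  moreover have "0 \<le> v \<bullet> (B *\<^sub>v v)" if "v \<in> carrier_vec n" for v
    using B that nonneg[of "\<lambda>i. v $ i"]
    by (simp add: scalar_prod_def mult_mat_vec_def atLeast0LessThan row_def mult.commute)
  ultimately show ?thesis
    using B by (simp add: psd_mat_def)
qed

lemma psd_form_diff:
  fixes B :: "nat \<Rightarrow> nat \<Rightarrow> real"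
  assumes sym: "\<And>i j. i < n \<Longrightarrow> j < n \<Longrightarrow> B i j = B j i"
  shows "(\<Sum>i<n. (v i - t * w i) * (\<Sum>j<n. B i j * (v j - t * w j)))
    = (\<Sum>i<n. v i * (\<Sum>j<n. B i j * v j)) - 2 * t * (\<Sum>i<n. w i * (\<Sum>j<n. B i j * v j))
      + t\<^sup>2 * (\<Sum>i<n. w i * (\<Sum>j<n. B i j * w j))"
proof -
  define Bv where "Bv i = (\<Sum>j<n. B i j * v j)" for i
  define Bw where "Bw i = (\<Sum>j<n. B i j * w j)" for i
  have "(\<Sum>i<n. v i * Bw i) = (\<Sum>i<n. \<Sum>j<n. w j * (B j i * v i))"
    unfolding Bw_def using sym by (auto simp: sum_distrib_left mult_ac intro!: sum.cong)
  also have "\<dots> = (\<Sum>j<n. w j * Bv j)"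
    unfolding Bv_def by (subst sum.swap) (simp add: sum_distrib_left)
  finally have cross: "(\<Sum>i<n. v i * Bw i) = (\<Sum>i<n. w i * Bv i)" .
  have "(\<Sum>j<n. B i j * (v j - t * w j)) = Bv i - t * Bw i" for i
    unfolding Bv_def Bw_def by (simp add: right_diff_distrib sum_subtractf sum_distrib_left mult_ac)
  then have "(\<Sum>i<n. (v i - t * w i) * (\<Sum>j<n. B i j * (v j - t * w j)))
      = (\<Sum>i<n. (v i - t * w i) * (Bv i - t * Bw i))"
    by (simp only:)
  also have "\<dots> = (\<Sum>i<n. v i * Bv i) - t * (\<Sum>i<n. v i * Bw i) - t * (\<Sum>i<n. w i * Bv i)
      + t\<^sup>2 * (\<Sum>i<n. w i * Bw i)"
    by (simp add: algebra_simps power2_eq_square sum_subtractf sum.distrib sum_distrib_left)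
  finally have "(\<Sum>i<n. (v i - t * w i) * (\<Sum>j<n. B i j * (v j - t * w j)))
      = (\<Sum>i<n. v i * Bv i) - t * (\<Sum>i<n. v i * Bw i) - t * (\<Sum>i<n. w i * Bv i)
      + t\<^sup>2 * (\<Sum>i<n. w i * Bw i)" .
  then show ?thesis
    unfolding cross Bv_def[symmetric] Bw_def[symmetric] by simp
qed

lemma psd_form_zero_imp_kernel:
  fixes B :: "nat \<Rightarrow> nat \<Rightarrow> real"
  assumes sym: "\<And>i j. i < n \<Longrightarrow> j < n \<Longrightarrow> B i j = B j i"
    and psd: "\<And>v. 0 \<le> (\<Sum>i<n. v i * (\<Sum>j<n. B i j * v j))"
    and zero: "(\<Sum>i<n. v i * (\<Sum>j<n. B i j * v j)) = 0"
    and i: "i < n"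
  shows "(\<Sum>j<n. B i j * v j) = 0"
proof -
  define w where "w i = (\<Sum>j<n. B i j * v j)" for i
  have "t * (2 * (\<Sum>i<n. (w i)\<^sup>2)) - t\<^sup>2 * (\<Sum>i<n. w i * (\<Sum>j<n. B i j * w j)) \<le> 0" for t
    using psd[of "\<lambda>i. v i - t * w i"] psd_form_diff[of n B v t w, OF sym] zero
    unfolding w_def[symmetric] by (simp add: power2_eq_square algebra_simps)
  then have "2 * (\<Sum>i<n. (w i)\<^sup>2) = 0"
    by (rule linear_coeff_zero_if_quadratic_nonpos)
  then show ?thesis
    using i unfolding w_def by (simp add: sum_nonneg_eq_0_iff)
qed

text \<open>With D = B - C, the hypothesis B^2 = C^2 gives B D = -(C D)^T, so
  tr(D B D) + tr(D C D) = 0. Both traces are nonnegative, so both vanish.\<close>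
lemma psd_square_eq_kernels:
  fixes B C :: "nat \<Rightarrow> nat \<Rightarrow> real"
  assumes symB: "\<And>i j. i < n \<Longrightarrow> j < n \<Longrightarrow> B i j = B j i"
    and symC: "\<And>i j. i < n \<Longrightarrow> j < n \<Longrightarrow> C i j = C j i"
    and psdB: "\<And>v. 0 \<le> (\<Sum>i<n. v i * (\<Sum>j<n. B i j * v j))"
    and psdC: "\<And>v. 0 \<le> (\<Sum>i<n. v i * (\<Sum>j<n. C i j * v j))"
    and sq: "\<And>i j. i < n \<Longrightarrow> j < n \<Longrightarrow> (\<Sum>k<n. B i k * B k j) = (\<Sum>k<n. C i k * C k j)"
    and kj: "k < n" "j < n"
  shows "(\<Sum>l<n. B k l * (B l j - C l j)) = 0 \<and> (\<Sum>l<n. C k l * (B l j - C l j)) = 0"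
proof -
  define D where "D i j = B i j - C i j" for i j
  define BD where "BD k j = (\<Sum>l<n. B k l * D l j)" for k j
  define CD where "CD k j = (\<Sum>l<n. C k l * D l j)" for k j
  define fB where "fB j = (\<Sum>k<n. D k j * BD k j)" for j
  define fC where "fC j = (\<Sum>k<n. D k j * CD k j)" for j
  have fB: "0 \<le> fB j" and fC: "0 \<le> fC j" for j
    unfolding fB_def fC_def BD_def CD_def by (rule psdB, rule psdC)
  have "BD k j = - CD j k" if "k < n" "j < n" for k j
  proof -
    have "BD k j = (\<Sum>l<n. B k l * B l j) - (\<Sum>l<n. B k l * C l j)"
      and "CD j k = (\<Sum>l<n. B k l * C l j) - (\<Sum>l<n. C k l * C l j)"
      unfolding BD_def CD_def D_def using that symB symC
      by (auto simp: algebra_simps sum_subtractf intro!: sum.cong)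
    then show ?thesis
      using sq[OF that] by simp
  qed
  then have "sum fB {..<n} = - sum fC {..<n}"
    unfolding fB_def fC_def D_def using symB symC
    by (subst (2) sum.swap) (simp add: sum_negf[symmetric] algebra_simps)
  then have "\<forall>j\<in>{..<n}. fB j + fC j = 0"
    using fB fC by (subst sum_nonneg_eq_0_iff[symmetric]) (auto simp: add_nonneg_nonneg sum.distrib)
  then have "fB j + fC j = 0"
    using kj by simp
  then have "fB j = 0 \<and> fC j = 0"
    using fB[of j] fC[of j] by (simp add: add_nonneg_eq_0_iff)
  then show ?thesis
    using kj psd_form_zero_imp_kernel[OF symB psdB, of "\<lambda>l. D l j" k]
      psd_form_zero_imp_kernel[OF symC psdC, of "\<lambda>l. D l j" k]
    unfolding fB_def fC_def BD_def CD_def D_def by auto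
qed

lemma psd_square_root_unique:
  fixes B C :: "nat \<Rightarrow> nat \<Rightarrow> real"
  assumes symB: "\<And>i j. i < n \<Longrightarrow> j < n \<Longrightarrow> B i j = B j i"
    and symC: "\<And>i j. i < n \<Longrightarrow> j < n \<Longrightarrow> C i j = C j i"
    and psdB: "\<And>v. 0 \<le> (\<Sum>i<n. v i * (\<Sum>j<n. B i j * v j))"
    and psdC: "\<And>v. 0 \<le> (\<Sum>i<n. v i * (\<Sum>j<n. C i j * v j))"
    and sq: "\<And>i j. i < n \<Longrightarrow> j < n \<Longrightarrow> (\<Sum>k<n. B i k * B k j) = (\<Sum>k<n. C i k * C k j)"
    and ij: "i < n" "j < n"
  shows "B i j = C i j"
proof -
  note kernels = psd_square_eq_kernels[OF symB symC psdB psdC sq ij(1) ij(1)]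
  have "(\<Sum>k<n. (B i k - C i k)\<^sup>2) = (\<Sum>k<n. (B i k - C i k) * (B k i - C k i))"
    using symB symC ij by (intro sum.cong refl) (simp add: power2_eq_square)
  also have "\<dots> = (\<Sum>l<n. B i l * (B l i - C l i)) - (\<Sum>l<n. C i l * (B l i - C l i))"
    by (simp add: left_diff_distrib sum_subtractf)
  finally have "(\<Sum>k<n. (B i k - C i k)\<^sup>2) = 0"
    using kernels by simp
  then show ?thesis
    using ij by (simp add: sum_nonneg_eq_0_iff)
qed

lemma psd_sqrt_eq:
  assumes H: "psd_mat n H" and HH: "H * H = M"
  shows "psd_sqrt n M = H"
  unfolding psd_sqrt_def
proof (rule the_equality)
  show "psd_mat n H \<and> H * H = M"
    using H HH by simp
  fix B assume B: "psd_mat n B \<and> B * B = M"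
  have Bc: "B \<in> carrier_mat n n" and Hc: "H \<in> carrier_mat n n"
    using B H psd_matD(1) by auto
  have sq: "(\<Sum>k<n. B $$ (i, k) * B $$ (k, j)) = (\<Sum>k<n. H $$ (i, k) * H $$ (k, j))"
    if "i < n" "j < n" for i j
  proof -
    have "(B * B) $$ (i, j) = (H * H) $$ (i, j)"
      using B HH by simp
    then show ?thesis
      using Bc Hc that by (simp add: index_mult_mat_sum del: index_mult_mat(1))
  qed
  show "B = H"
    using Bc Hc psd_square_root_unique[of n "\<lambda>i j. B $$ (i, j)" "\<lambda>i j. H $$ (i, j)", OF _ _ _ _ sq]
      psd_matD[OF conjunct1[OF B]] psd_matD[OF H]
    by (intro eq_matI) auto
qed

lemma P_St_stiefel_maximizer:
  assumes "A \<in> carrier_mat d K" "Y \<in> P_St d K A"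
  shows "stiefel_maximizer d K A Y"
  using assms by unfold_locales (simp_all add: P_St_stiefel P_St_maximizes_frob_inner)

context stiefel_maximizer
begin

lemma index_polar_factor:
  "k < K \<Longrightarrow> l < K \<Longrightarrow> (transpose_mat Y * A) $$ (k, l) = col_inner d Y A k l"
  using stiefel_carrier[OF Y_stiefel] A_carrier by (rule index_transpose_mult)

lemma polar_factor_carrier: "transpose_mat Y * A \<in> carrier_mat K K"
  using stiefel_carrier[OF Y_stiefel] A_carrier by simp

lemma polar_factor_psd: "psd_mat K (transpose_mat Y * A)"
  by (rule psd_matI[OF polar_factor_carrier])
    (simp_all add: index_polar_factor col_inner_symmetric col_inner_quadratic_form_nonneg)

lemma polar_decomposition: "A = Y * (transpose_mat Y * A)"
proof (rule eq_matI)
  fix r i assume "r < dim_row (Y * (transpose_mat Y * A))" "i < dim_col (Y * (transpose_mat Y * A))"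
  then have "r < d" "i < K"
    using stiefel_carrier[OF Y_stiefel] polar_factor_carrier by auto
  then show "A $$ (r, i) = (Y * (transpose_mat Y * A)) $$ (r, i)"
    using stiefel_carrier[OF Y_stiefel] polar_factor_carrier A_carrier
    by (simp add: index_mult_mat_sum column_in_range[of i r] col_inner_def del: index_mult_mat(1))
qed (use stiefel_carrier[OF Y_stiefel] A_carrier polar_factor_carrier in auto)

lemma psd_sqrt_gram: "psd_sqrt K (transpose_mat A * A) = transpose_mat Y * A"
proof (rule psd_sqrt_eq[OF polar_factor_psd])
  define H where "H = transpose_mat Y * A"
  have Y: "Y \<in> carrier_mat d K" and H: "H \<in> carrier_mat K K"
    using stiefel_carrier[OF Y_stiefel] polar_factor_carrier unfolding H_def .
  have "transpose_mat A * A = (transpose_mat H * transpose_mat Y) * (Y * H)"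
    using polar_decomposition transpose_mult[OF Y H] unfolding H_def by simp
  also have "\<dots> = transpose_mat H * ((transpose_mat Y * Y) * H)"
    using Y H by (simp add: assoc_mult_mat[of _ K d _ K _ K] assoc_mult_mat[of _ K K _ d _ K])
  also have "\<dots> = H * H"
    using Y_stiefel polar_factor_psd left_mult_one_mat[OF H] unfolding H_def
    by (simp add: stiefel_def psd_mat_def)
  finally show "H * H = transpose_mat A * A" ..
qed

lemma polar_residual_le:
  assumes X: "X \<in> carrier_mat d K"
  shows "frob_norm (X * psd_sqrt K (transpose_mat A * A) - A)
    \<le> sqrt (real K) * frob_norm A * frob_norm (Y - X)"
proof -
  define H where "H = transpose_mat Y * A"
  have Y: "Y \<in> carrier_mat d K" and H: "H \<in> carrier_mat K K"
    using stiefel_carrier[OF Y_stiefel] polar_factor_carrier unfolding H_def .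
  have "X * psd_sqrt K (transpose_mat A * A) - A = (X - Y) * H"
    using polar_decomposition X Y H unfolding psd_sqrt_gram H_def[symmetric]
    by (simp add: minus_mult_distrib_mat[of _ d K])
  moreover have "frob_norm ((X - Y) * H) \<le> frob_norm (X - Y) * frob_norm H"
    using X Y H by (simp add: frob_norm_mult_le)
  moreover have "frob_norm H \<le> sqrt (real K) * frob_norm A"
    using frob_norm_mult_le[of "transpose_mat Y" A] Y A_carrier
    unfolding H_def by (simp add: frob_norm_transpose frob_norm_stiefel[OF Y_stiefel])
  ultimately show ?thesis
    using frob_norm_minus_commute[OF X Y] frob_norm_nonneg[of "X - Y"]
    by (smt (verit) mult.commute mult_left_mono)
qed

end

lemma rho_alpha_le:
  assumes Q: "Q \<in> carrier_mat d K" and X: "X \<in> stiefel d K"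
    and Y: "Y \<in> P_St d K (A_alpha K Q lam a \<alpha> X)"
  shows "rho_alpha K Q lam a \<alpha> X
    \<le> sqrt (real K) * frob_norm (A_alpha K Q lam a \<alpha> X) * frob_norm (Y - X)"
proof -
  have "A_alpha K Q lam a \<alpha> X \<in> carrier_mat d K"
    using Q X by (simp add: A_alpha_carrier stiefel_carrier)
  then interpret stiefel_maximizer d K "A_alpha K Q lam a \<alpha> X" Y
    using Y by (rule P_St_stiefel_maximizer)
  show ?thesis
    unfolding rho_alpha_def Let_def using X by (simp add: polar_residual_le stiefel_carrier)
qed

lemma frob_norm_A_alpha_le:
  assumes Q: "Q \<in> carrier_mat d K" and X: "X \<in> stiefel d K" and "0 \<le> \<alpha>"
  shows "frob_norm (A_alpha K Q lam a \<alpha> X)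
    \<le> sqrt (real K) * (\<alpha> + frob_norm (Q * diagm K lam * transpose_mat Q) * frob_norm (diagm K a))"
proof -
  let ?M = "Q * diagm K lam * transpose_mat Q"
  have Xc: "X \<in> carrier_mat d K"
    using X by (rule stiefel_carrier)
  have M: "?M \<in> carrier_mat d d"
    using gram_operator_carrier(1)[OF Q Xc] .
  have "frob_norm (?M * X * diagm K a) \<le> frob_norm (?M * X) * frob_norm (diagm K a)"
    using M Xc by (intro frob_norm_mult_le) simp
  also have "\<dots> \<le> frob_norm ?M * frob_norm X * frob_norm (diagm K a)"
    using M Xc by (intro mult_right_mono frob_norm_mult_le frob_norm_nonneg) auto
  finally have "frob_norm (?M * X * diagm K a) \<le> sqrt (real K) * (frob_norm ?M * frob_norm (diagm K a))"
    by (simp add: frob_norm_stiefel[OF X] mult_ac)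
  moreover have "frob_norm (A_alpha K Q lam a \<alpha> X) \<le> frob_norm (\<alpha> \<cdot>\<^sub>m X) + frob_norm (?M * X * diagm K a)"
    unfolding A_alpha_def using Xc gram_operator_carrier(2)[OF Q Xc] by (intro frob_norm_add_le) auto
  ultimately show ?thesis
    using \<open>0 \<le> \<alpha>\<close> by (simp add: frob_norm_smult frob_norm_stiefel[OF X] algebra_simps)
qed

lemma iteration_bounds:
  assumes Q: "Q \<in> stiefel d K"
    and lam: "\<And>l. l < K \<Longrightarrow> 0 \<le> lam l" and a: "\<And>k. k < K \<Longrightarrow> 0 \<le> a k" and "0 \<le> \<alpha>"
    and "X 0 \<in> stiefel d K" and step: "\<forall>t. X (Suc t) \<in> P_St d K (A_alpha K Q lam a \<alpha> (X t))"
  shows "\<alpha> * (frob_norm (X t - X (Suc t)))\<^sup>2 \<le> gfun K Q lam a (X (Suc t)) - gfun K Q lam a (X t)"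
    and "gfun K Q lam a Q - gfun K Q lam a (X t) \<le> (\<Sum>k<K. a k * lam k) * (dF K (X t) Q)\<^sup>2"
    and "rho_alpha K Q lam a \<alpha> (X t) \<le> real K * (\<alpha> + frob_norm (Q * diagm K lam * transpose_mat Q)
          * frob_norm (diagm K a)) * frob_norm (X (Suc t) - X t)"
proof -
  have Qc: "Q \<in> carrier_mat d K"
    using Q by (rule stiefel_carrier)
  have X: "X t \<in> stiefel d K"
    using assms(5) step P_St_stiefel by (cases t) blast+
  have Y: "X (Suc t) \<in> P_St d K (A_alpha K Q lam a \<alpha> (X t))"
    using step by simp
  show "\<alpha> * (frob_norm (X t - X (Suc t)))\<^sup>2 \<le> gfun K Q lam a (X (Suc t)) - gfun K Q lam a (X t)"
    by (rule gfun_ascent[OF Qc X Y lam a])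
  show "gfun K Q lam a Q - gfun K Q lam a (X t) \<le> (\<Sum>k<K. a k * lam k) * (dF K (X t) Q)\<^sup>2"
    by (rule gfun_gap_le_dF[OF Q X lam a])
  have "rho_alpha K Q lam a \<alpha> (X t)
      \<le> sqrt (real K) * frob_norm (A_alpha K Q lam a \<alpha> (X t)) * frob_norm (X (Suc t) - X t)"
    by (rule rho_alpha_le[OF Qc X Y])
  also have "\<dots> \<le> sqrt (real K) * (sqrt (real K) * (\<alpha> + frob_norm (Q * diagm K lam * transpose_mat Q)
      * frob_norm (diagm K a))) * frob_norm (X (Suc t) - X t)"
    using frob_norm_A_alpha_le[OF Qc X \<open>0 \<le> \<alpha>\<close>] by (intro mult_right_mono mult_left_mono frob_norm_nonneg) simp_all
  finally show "rho_alpha K Q lam a \<alpha> (X t) \<le> real K * (\<alpha> + frob_norm (Q * diagm K lam * transpose_mat Q)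
      * frob_norm (diagm K a)) * frob_norm (X (Suc t) - X t)"
    by (simp add: mult.assoc[symmetric])
qed

theorem proposition1:
  fixes d K :: nat and Q :: "real mat" and lam a :: "nat \<Rightarrow> real"
  assumes "1 \<le> K" and "K < d"
    and "Q \<in> stiefel d K"
    and "\<And>i j. i < j \<Longrightarrow> j < K \<Longrightarrow> lam j < lam i"
    and "\<And>i. i < K \<Longrightarrow> lam i > 0"
    and "\<And>i j. i < j \<Longrightarrow> j < K \<Longrightarrow> a j < a i"
    and "\<And>i. i < K \<Longrightarrow> a i > 0"
  shows "\<forall>\<alpha>>0. \<exists>\<beta>3>0. \<exists>\<beta>4>0. \<forall>X :: nat \<Rightarrow> real mat.
           (X 0 \<in> stiefel d K \<and> (\<forall>t. X (Suc t) \<in> P_St d K (A_alpha K Q lam a \<alpha> (X t))))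
           \<longrightarrow> (\<forall>t.
                 gfun K Q lam a (X (Suc t)) - gfun K Q lam a (X t)
                   \<ge> \<alpha> * (frob_norm (X t - X (Suc t)))\<^sup>2
               \<and> gfun K Q lam a Q - gfun K Q lam a (X t) \<le> \<beta>3 * (dF K (X t) Q)\<^sup>2
               \<and> rho_alpha K Q lam a \<alpha> (X t) \<le> \<beta>4 * frob_norm (X (Suc t) - X t))"
proof (intro allI impI)
  fix \<alpha> :: real
  assume "0 < \<alpha>"
  have lam: "\<And>l. l < K \<Longrightarrow> 0 \<le> lam l" and a: "\<And>k. k < K \<Longrightarrow> 0 \<le> a k"
    using assms(5,7) by (simp_all add: less_imp_le)
  define \<beta>3 where "\<beta>3 = (\<Sum>k<K. a k * lam k)"
  define \<beta>4 where "\<beta>4 = real K * (\<alpha> + frob_norm (Q * diagm K lam * transpose_mat Q) * frob_norm (diagm K a))"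
  have "0 < \<beta>3"
    unfolding \<beta>3_def using assms(1,5,7) by (intro sum_pos) (auto simp: lessThan_empty_iff)
  moreover have "0 < \<beta>4"
    unfolding \<beta>4_def using assms(1) \<open>0 < \<alpha>\<close> by (simp add: frob_norm_nonneg add_pos_nonneg)
  ultimately show "\<exists>\<beta>3>0. \<exists>\<beta>4>0. \<forall>X :: nat \<Rightarrow> real mat.
           (X 0 \<in> stiefel d K \<and> (\<forall>t. X (Suc t) \<in> P_St d K (A_alpha K Q lam a \<alpha> (X t))))
           \<longrightarrow> (\<forall>t.
                 gfun K Q lam a (X (Suc t)) - gfun K Q lam a (X t)
                   \<ge> \<alpha> * (frob_norm (X t - X (Suc t)))\<^sup>2
               \<and> gfun K Q lam a Q - gfun K Q lam a (X t) \<le> \<beta>3 * (dF K (X t) Q)\<^sup>2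
               \<and> rho_alpha K Q lam a \<alpha> (X t) \<le> \<beta>4 * frob_norm (X (Suc t) - X t))"
    using iteration_bounds[where lam = lam and a = a, OF assms(3) lam a less_imp_le[OF \<open>0 < \<alpha>\<close>],
        folded \<beta>3_def \<beta>4_def]
    by (intro exI[of _ \<beta>3] exI[of _ \<beta>4] conjI allI impI) simp_all
qed

end
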